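(* Let $M$ be the All Attack Structure for a plant $G$, observable events $\Sigma_o$, supervisor $S$ realized by $H$, vulnerable events $\Sigma_v$, and secret initial states $X_{sec}\subseteq X_0$. If $q_e$ is a positive (respectively, negative) detected environment state of $M$, then every environment state of $M$ reachable from $q_e$ is a positive (respectively, negative) detected state.
   Context: A plant is a finite automaton $G=(X,\Sigma,\delta,X_0)$ with partial transition function $\delta$ (extended to strings) and initial states $X_0\subseteq X$; $\Sigma=\Sigma_o\dot\cup\Sigma_{uo}$. A supervisor $S$ is realized by a deterministic automaton $H=(Z,\Sigma,\xi,z_0)$ (its control decision after a string leading $H$ to $z$ is $\Delta_H(z)$, the set of events defined at $z$; only observable events change the state of $H$). $\Sigma_v\subseteq\Sigma_o$ are vulnerable events and $X_{sec}\subseteq X_0$ secret initial states. Operators: for $q\subseteq X$, $\gamma\subseteq\Sigma$, $\sigma\in\Sigma_o$: $\textsf{UR}_\gamma(q)=\{\delta(x,s):x\in q,s\in(\Sigma_{uo}\cap\gamma)^*\}$, $\textsf{NX}_\sigma(q)=\{\delta(x,\sigma):x\in q\}$, $\textsf{NX}_\epsilon(q)=q$, $\mathcal{O}(q,\gamma)=\{\sigma\in\Sigma_o\cap\gamma:\exists x\in q,\exists w\in(\Sigma_{uo}\cap\gamma)^*,\delta(x,w\sigma)\text{ defined}\}$. Augmented system: states $\tilde X\subseteq X_0\times X$, $\tilde X_0=\{(x_0,x_0):x_0\in X_0\}$, $\tilde\delta((x_0,x),\sigma)=(x_0,\delta(x,\sigma))$; $\widetilde{\textsf{UR}},\widetilde{\textsf{NX}},\mathcal{O}(\tilde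 q,\gamma)$ defined analogously. $I(\tilde q)=\{x_0:(x_0,x)\in\tilde q\text{ for some }x\}$. All Attack Structure: for $\sigma\in\Sigma_o$, $\hat\sigma$ is a doctored copy, $\hat\epsilon$ an erasure symbol; $\mathcal{V}(\sigma)=\{\hat\sigma':\sigma'\in\Sigma_v\}\cup\{\hat\epsilon\}$ if $\sigma\in\Sigma_v$, else $\{\hat\sigma\}$. $M=(Q,\Sigma_M,f,q_0)$, $q_0=(X_0,\tilde X_0,z_0)$, states reachable from $q_0$, $Q=Q_e\dot\cup Q_a$: environment states $(q,\tilde q,z)$ with $q\subseteq X,\tilde q\subseteq\tilde X,z\in Z\cup\{z_{\textsf{att}}\}$ ($z_{\textsf{att}}$ new, $\Delta_H(z_{\textsf{att}})=\emptyset$); attack states $(q,\tilde q,z,\sigma)$. At $(q,\tilde q,z)$ enabled events are $\mathcal{O}(\tilde q,\Delta_H(z))$ if $z\in Z$, none if $z=z_{\textsf{att}}$, with $f((q,\tilde q,z),\sigma)=(q,\tilde q,z,\sigma)$. At $(q,\tilde q,z,\sigma)$ enabled events are $\mathcal{V}(\sigma)$, with $f((q,\tilde q,z,\sigma),\hat\sigma_a)=(q',\tilde q',z')$, $q'=\textsf{NX}_{\sigma_a}(\textsf{UR}_{\Delta_H(z)}(q))$, $\tilde q'=\widetilde{\textsf{NX}}_\sigma(\widetilde{\textsf{UR}}_{\Delta_H(z)}(\tilde q))$, $z'=\xi(z,\sigma_a)$ if $q'\ne\emptyset$ (with $\xi(z,\epsilon)=z$), $z'=z_{\textsf{att}}$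 otherwise. An environment state $(q,\tilde q,z)$ is a positive detected state if $I(\tilde q)\subseteq X_{sec}$, and a negative detected state if $I(\tilde q)\cap X_{sec}=\emptyset$. *)

theory Defs
  imports Main
begin

(* Plant G = (X, Sigma, delta, X0): X = UNIV :: 'x set, Sigma = UNIV :: 'e set,
   delta partial (option-valued). Sigma_uo = - Sigma_o. *)

fun dstar :: "('x \<Rightarrow> 'e \<Rightarrow> 'x option) \<Rightarrow> 'x \<Rightarrow> 'e list \<Rightarrow> 'x option" where
  "dstar \<delta> x [] = Some x"
| "dstar \<delta> x (a # s) = (case \<delta> x a of None \<Rightarrow> None | Some y \<Rightarrow> dstar \<delta> y s)"

definition UR :: "('x \<Rightarrow> 'e \<Rightarrow> 'x option) \<Rightarrow> 'e set \<Rightarrow> 'e set \<Rightarrow> 'x set \<Rightarrow> 'x set" where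
  "UR \<delta> So \<gamma> q = {x'. \<exists>x\<in>q. \<exists>s. set s \<subseteq> (- So) \<inter> \<gamma> \<and> dstar \<delta> x s = Some x'}"

(* NX_sigma(q), with sigma = None standing for epsilon *)
definition NX :: "('x \<Rightarrow> 'e \<Rightarrow> 'x option) \<Rightarrow> 'e option \<Rightarrow> 'x set \<Rightarrow> 'x set" where
  "NX \<delta> \<sigma> q = (case \<sigma> of None \<Rightarrow> q | Some s \<Rightarrow> {x'. \<exists>x\<in>q. \<delta> x s = Some x'})"

definition aug :: "('x \<Rightarrow> 'e \<Rightarrow> 'x option) \<Rightarrow> ('x \<times> 'x) \<Rightarrow> 'e \<Rightarrow> ('x \<times> 'x) option" where
  "aug \<delta> p \<sigma> = map_option (\<lambda>y. (fst p, y)) (\<delta> (snd p) \<sigma>)"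

definition aug_init :: "'x set \<Rightarrow> ('x \<times> 'x) set" where
  "aug_init X0 = {(x0, x0) | x0. x0 \<in> X0}"

definition Oev :: "('s \<Rightarrow> 'e \<Rightarrow> 's option) \<Rightarrow> 'e set \<Rightarrow> 's set \<Rightarrow> 'e set \<Rightarrow> 'e set" where
  "Oev d So q \<gamma> = {\<sigma> \<in> So \<inter> \<gamma>. \<exists>x\<in>q. \<exists>w. set w \<subseteq> (- So) \<inter> \<gamma> \<and> dstar d x (w @ [\<sigma>]) \<noteq> None}"

definition Iset :: "('x \<times> 'x) set \<Rightarrow> 'x set" where
  "Iset qt = {x0. \<exists>x. (x0, x) \<in> qt}"

definition DeltaH :: "('z \<Rightarrow> 'e \<Rightarrow> 'z option) \<Rightarrow> 'z \<Rightarrow> 'e set" where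
  "DeltaH \<xi> z = {\<sigma>. \<xi> z \<sigma> \<noteq> None}"

(* events of M: observable events, doctored copies \<hat>sigma, and \<hat>epsilon *)
datatype 'e mlabel = Obs 'e | Hat 'e | HatEps

(* states of M; the supervisor component 'z option uses None for z_att *)
datatype ('x, 'z, 'e) mstate =
    Env "'x set" "('x \<times> 'x) set" "'z option"
  | Att "'x set" "('x \<times> 'x) set" "'z option" 'e

definition Vset :: "'e set \<Rightarrow> 'e \<Rightarrow> 'e mlabel set" where
  "Vset Sv \<sigma> = (if \<sigma> \<in> Sv then Hat ` Sv \<union> {HatEps} else {Hat \<sigma>})"

definition attacked :: "'e mlabel \<Rightarrow> 'e option" where
  "attacked l = (case l of Hat s \<Rightarrow> Some s | _ \<Rightarrow> None)"

fun mtrans :: "('x \<Rightarrow> 'e \<Rightarrow> 'x option) \<Rightarrow> 'e set \<Rightarrow> ('z \<Rightarrow> 'e \<Rightarrow> 'z option) \<Rightarrow> 'e set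
    \<Rightarrow> ('x, 'z, 'e) mstate \<Rightarrow> 'e mlabel \<Rightarrow> ('x, 'z, 'e) mstate option" where
  "mtrans \<delta> So \<xi> Sv (Env q qt (Some z)) (Obs \<sigma>) =
     (if \<sigma> \<in> Oev (aug \<delta>) So qt (DeltaH \<xi> z) then Some (Att q qt (Some z) \<sigma>) else None)"
| "mtrans \<delta> So \<xi> Sv (Att q qt (Some z) \<sigma>) l =
     (if l \<in> Vset Sv \<sigma> then
        (let q' = NX \<delta> (attacked l) (UR \<delta> So (DeltaH \<xi> z) q);
             qt' = NX (aug \<delta>) (Some \<sigma>) (UR (aug \<delta>) So (DeltaH \<xi> z) qt)
         in if q' = {} then Some (Env q' qt' None)
            else (case attacked l of
                    None \<Rightarrow> Some (Env q' qt' (Some z))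
                  | Some sa \<Rightarrow> map_option (\<lambda>z'. Env q' qt' (Some z')) (\<xi> z sa)))
      else None)"
| "mtrans \<delta> So \<xi> Sv s l = None"

definition mstep where
  "mstep \<delta> So \<xi> Sv = {(s, s'). \<exists>l. mtrans \<delta> So \<xi> Sv s l = Some s'}"

definition minit :: "'x set \<Rightarrow> 'z \<Rightarrow> ('x, 'z, 'e) mstate" where
  "minit X0 z0 = Env X0 (aug_init X0) (Some z0)"

definition Mstates where
  "Mstates \<delta> X0 So \<xi> z0 Sv = (mstep \<delta> So \<xi> Sv)\<^sup>* `` {minit X0 z0}"

fun is_env :: "('x, 'z, 'e) mstate \<Rightarrow> bool" where
  "is_env (Env _ _ _) = True" | "is_env _ = False"

fun pos_detected :: "'x set \<Rightarrow> ('x, 'z, 'e) mstate \<Rightarrow> bool" where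
  "pos_detected Xsec (Env q qt z) = (Iset qt \<subseteq> Xsec)" | "pos_detected Xsec _ = False"

fun neg_detected :: "'x set \<Rightarrow> ('x, 'z, 'e) mstate \<Rightarrow> bool" where
  "neg_detected Xsec (Env q qt z) = (Iset qt \<inter> Xsec = {})" | "neg_detected Xsec _ = False"

end

theory Submission
  imports Defs
begin

(* The augmented system never changes the first component of its states, so the set I of
   candidate initial states can only shrink along transitions of M. Both detection conditions,
   I \<subseteq> Xsec and I \<inter> Xsec = {}, are inherited by subsets. *)

fun aug_estimate :: "('x, 'z, 'e) mstate \<Rightarrow> ('x \<times> 'x) set" where
  "aug_estimate (Env q qt z) = qt"
| "aug_estimate (Att q qt z \<sigma>) = qt"

lemma dstar_aug_fst: "dstar (aug \<delta>) p s = Some p' \<Longrightarrow> fst p' = fst p"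
  by (induction s arbitrary: p) (auto simp: aug_def split: option.splits)

lemma Iset_UR_aug_subset: "Iset (UR (aug \<delta>) So \<gamma> qt) \<subseteq> Iset qt"
proof
  fix x0 assume "x0 \<in> Iset (UR (aug \<delta>) So \<gamma> qt)"
  then obtain x p s where "p \<in> qt" "dstar (aug \<delta>) p s = Some (x0, x)"
    by (auto simp: Iset_def UR_def)
  then show "x0 \<in> Iset qt"
    using dstar_aug_fst[of \<delta> p s "(x0, x)"] by (cases p) (auto simp: Iset_def)
qed

lemma Iset_NX_aug_subset: "Iset (NX (aug \<delta>) \<sigma> qt) \<subseteq> Iset qt"
  by (auto simp: Iset_def NX_def aug_def split: option.splits)

lemma Iset_mtrans_subset:
  assumes "mtrans \<delta> So \<xi> Sv s l = Some s'"
  shows "Iset (aug_estimate s') \<subseteq> Iset (aug_estimate s)"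
  using assms
proof (induction \<delta> So \<xi> Sv s l rule: mtrans.induct)
  case (2 \<delta> So \<xi> Sv q qt z \<sigma> l)
  have "Iset (NX (aug \<delta>) (Some \<sigma>) (UR (aug \<delta>) So (DeltaH \<xi> z) qt)) \<subseteq> Iset qt"
    using Iset_NX_aug_subset Iset_UR_aug_subset by (rule order_trans)
  with 2 show ?case
    by (auto simp: Let_def split: if_splits option.splits)
qed (auto split: if_splits)

lemma Iset_rtrancl_mstep_subset:
  assumes "(s, s') \<in> (mstep \<delta> So \<xi> Sv)\<^sup>*"
  shows "Iset (aug_estimate s') \<subseteq> Iset (aug_estimate s)"
  using assms
proof (induction rule: rtrancl_induct)
  case (step s' s'')
  then show ?case
    using Iset_mtrans_subset[of \<delta> So \<xi> Sv s'] by (fastforce simp: mstep_def)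
qed simp

lemma pos_detected_iff:
  "pos_detected Xsec s \<longleftrightarrow> is_env s \<and> Iset (aug_estimate s) \<subseteq> Xsec"
  by (cases s) auto

lemma neg_detected_iff:
  "neg_detected Xsec s \<longleftrightarrow> is_env s \<and> Iset (aug_estimate s) \<inter> Xsec = {}"
  by (cases s) auto

theorem proposition3:
  fixes \<delta> :: "'x::finite \<Rightarrow> 'e::finite \<Rightarrow> 'x option"
    and X0 Xsec :: "'x set"
    and So Sv :: "'e set"
    and \<xi> :: "'z::finite \<Rightarrow> 'e \<Rightarrow> 'z option"
    and z0 :: 'z
    and qe :: "('x, 'z, 'e) mstate"
  assumes H_unobs: "\<And>z \<sigma> z'. \<sigma> \<notin> So \<Longrightarrow> \<xi> z \<sigma> = Some z' \<Longrightarrow> z' = z"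
    and Sv_sub: "Sv \<subseteq> So"
    and Xsec_sub: "Xsec \<subseteq> X0"
    and qe_state: "qe \<in> Mstates \<delta> X0 So \<xi> z0 Sv"
    and qe_env: "is_env qe"
  shows "(pos_detected Xsec qe \<longrightarrow>
            (\<forall>q'. (qe, q') \<in> (mstep \<delta> So \<xi> Sv)\<^sup>* \<and> is_env q' \<longrightarrow> pos_detected Xsec q'))
       \<and> (neg_detected Xsec qe \<longrightarrow>
            (\<forall>q'. (qe, q') \<in> (mstep \<delta> So \<xi> Sv)\<^sup>* \<and> is_env q' \<longrightarrow> neg_detected Xsec q'))"
  using Iset_rtrancl_mstep_subset[of qe _ \<delta> So \<xi> Sv]
  unfolding pos_detected_iff neg_detected_iff by blast

end
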